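(* Let $(n,w)$ be an instance of TSP with $w:E_n\to[-1,1]$ and $w[K_n]=d\binom{n}{2}$ for some $d\in[0,1]$. Let $X_0,X_1,\dots,X_{n-1}$ be the Hamilton martingale for $(n,w)$, let $Y_i=X_i-X_{i-1}$ ($1\le i\le n-1$) be its difference sequence and let $W=\sum_{i=1}^{n-1}\mathbb{E}(Y_i^2\mid\mathcal{F}_{i-1})$ be its predictable quadratic variation. Then, uniformly, $|Y_i|\le 6$ for all $i$ and $W\le 60(\sqrt{d}\,n+1)$.
   Context: $K_n=(V_n,E_n)$ is the complete graph; $w[G]=\sum_{e\in E(G)}|w(e)|$. Hamilton martingale: let $\tilde{\mathcal H}_n$ be the set of all $(n-1)!$ directed Hamilton cycles of $K_n$ with the uniform probability measure; $w(H)$ for directed $H$ is the sum of weights of its underlying undirected edges. Fix a distinguished vertex $v_0$ with $\sum_{v\in V_n\setminus\{v_0\}}|w(v_0v)|\le 2w[K_n]/n$. For $0\le k\le n-1$, let $\mathcal F_k$ be the $\sigma$-field generated by the partition of $\tilde{\mathcal H}_n$ according to the sequence $(v_1,\dots,v_k)$ of the first $k$ vertices following $v_0$ on the cycle. With $X=w(H)$ for uniformly random $H\in\tilde{\mathcal H}_n$, the Hamilton martingale is $X_i:=\mathbb{E}(X\mid\mathcal F_i)$, $i=0,\dots,n-1$. *)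

theory Defs
  imports Complex_Main
begin

definition Kn_edges :: "nat \<Rightarrow> nat set set" where
  "Kn_edges n = {e. e \<subseteq> {..<n} \<and> card e = 2}"

definition total_weight :: "nat \<Rightarrow> (nat set \<Rightarrow> real) \<Rightarrow> real" where
  "total_weight n w = (\<Sum>e\<in>Kn_edges n. \<bar>w e\<bar>)"

text \<open>Directed Hamilton cycles of K_n, each written uniquely as the vertex sequence
  (v0, v1, ..., v_{n-1}) read along the cycle starting at the distinguished vertex v0.
  There are (n-1)! of them.\<close>
definition ham_seqs :: "nat \<Rightarrow> nat \<Rightarrow> nat list set" where
  "ham_seqs n v0 = {xs. distinct xs \<and> set xs = {..<n} \<and> xs \<noteq> [] \<and> hd xs = v0}"

definition ham_weight :: "nat \<Rightarrow> (nat set \<Rightarrow> real) \<Rightarrow> nat list \<Rightarrow> real" where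
  "ham_weight n w xs = (\<Sum>i<n. w {xs ! i, xs ! ((i + 1) mod n)})"

text \<open>Conditional expectation (uniform measure) of f given F_k, the sigma-field generated
  by the first k vertices following v0, i.e. by the prefix of length k+1.\<close>
definition cond_exp_prefix ::
  "nat \<Rightarrow> nat \<Rightarrow> nat \<Rightarrow> (nat list \<Rightarrow> real) \<Rightarrow> nat list \<Rightarrow> real" where
  "cond_exp_prefix n v0 k f xs =
     (let C = {ys \<in> ham_seqs n v0. take (k + 1) ys = take (k + 1) xs}
      in (\<Sum>ys\<in>C. f ys) / real (card C))"

definition ham_mart :: "nat \<Rightarrow> (nat set \<Rightarrow> real) \<Rightarrow> nat \<Rightarrow> nat \<Rightarrow> nat list \<Rightarrow> real" where
  "ham_mart n w v0 k = cond_exp_prefix n v0 k (ham_weight n w)"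

definition ham_diff :: "nat \<Rightarrow> (nat set \<Rightarrow> real) \<Rightarrow> nat \<Rightarrow> nat \<Rightarrow> nat list \<Rightarrow> real" where
  "ham_diff n w v0 i xs = ham_mart n w v0 i xs - ham_mart n w v0 (i - 1) xs"

definition ham_pqv :: "nat \<Rightarrow> (nat set \<Rightarrow> real) \<Rightarrow> nat \<Rightarrow> nat list \<Rightarrow> real" where
  "ham_pqv n w v0 xs =
     (\<Sum>i=1..n-1. cond_exp_prefix n v0 (i - 1) (\<lambda>ys. (ham_diff n w v0 i ys)^2) xs)"

end

theory Submission
  imports Defs "HOL-Combinatorics.Multiset_Permutations"
begin

text \<open>Given its first k+1 vertices, a uniformly random Hamilton cycle continues as a uniformly
  random ordering of the set R of unvisited vertices. Hence X_k is the weight of the path visited so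
  far plus the mean weight of a path from its endpoint through R back to v0, and that mean has a
  closed form: (weight from the endpoint to R + weight from v0 to R + twice the weight inside R) / |R|.
  Consequently Y_{k+1} = g(v_{k+1}) - mean_R g, where, up to an additive constant, g(x) is w(v_k x)
  minus an average of edge weights at x, so it is bounded by 3. This gives |Y_{k+1}| \<le> 6 and, with
  m = |R| and D = 2 w[K_n], the bound E(Y_{k+1}^2 | F_k) \<le> 3 min(1, deg v_k / m) + 6 / (m(m-1)) +
  3 min(1, D / (m(m-1))). Summed over k, each min-term contributes O(sqrt D): cutting at m \<approx> sqrt D,
  at most sqrt D indices lie below the cut, and the tail sums telescope.\<close>

section \<open>Averaging over orderings of a finite set\<close>

lemma sum_permutations_of_set_Cons:
  assumes "finite A" "A \<noteq> {}"
  shows "(\<Sum>zs\<in>permutations_of_set A. g zs) =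
         (\<Sum>x\<in>A. \<Sum>zs\<in>permutations_of_set (A - {x}). g (x # zs))"
proof -
  have "(\<Sum>zs\<in>permutations_of_set A. g zs) =
        (\<Sum>x\<in>A. \<Sum>zs\<in>(\<lambda>xs. x # xs) ` permutations_of_set (A - {x}). g zs)"
    by (subst permutations_of_set_nonempty[OF assms(2)], rule sum.UNION_disjoint) (use assms in auto)
  also have "\<dots> = (\<Sum>x\<in>A. \<Sum>zs\<in>permutations_of_set (A - {x}). g (x # zs))"
    by (rule sum.cong[OF refl], subst sum.reindex) (auto simp: inj_on_def)
  finally show ?thesis .
qed

lemma mean_permutations_of_set_Cons:
  fixes g :: "'a list \<Rightarrow> real"
  assumes "finite A" "A \<noteq> {}"
  shows "(\<Sum>zs\<in>permutations_of_set A. g zs) / fact (card A) =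
         (\<Sum>x\<in>A. (\<Sum>zs\<in>permutations_of_set (A - {x}). g (x # zs)) / fact (card A - 1)) / card A"
proof -
  have "card A > 0" using assms by (simp add: card_gt_0_iff)
  then have "(fact (card A) :: real) = real (card A) * fact (card A - 1)"
    by (rule fact_reduce)
  then show ?thesis
    by (simp only: sum_permutations_of_set_Cons[OF assms] sum_divide_distrib[symmetric]
        divide_divide_eq_left mult.commute)
qed

lemma mean_permutations_of_set_hd:
  fixes h :: "'a \<Rightarrow> real"
  assumes "finite A" "A \<noteq> {}"
  shows "(\<Sum>zs\<in>permutations_of_set A. h (hd zs)) / fact (card A) = (\<Sum>x\<in>A. h x) / card A"
  using assms by (simp add: mean_permutations_of_set_Cons)

section \<open>Path weights and the mean completion weight\<close>

fun path_weight :: "('a set \<Rightarrow> real) \<Rightarrow> 'a list \<Rightarrow> real" where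
  "path_weight w (x # y # zs) = w {x, y} + path_weight w (y # zs)"
| "path_weight w _ = 0"

lemma path_weight_conv_sum:
  "path_weight w ys = (\<Sum>i<length ys - 1. w {ys ! i, ys ! (i + 1)})"
proof (induction w ys rule: path_weight.induct)
  case (1 w x y zs)
  then show ?case by (simp add: sum.lessThan_Suc_shift del: sum.lessThan_Suc)
qed simp_all

lemma path_weight_append:
  "ys \<noteq> [] \<Longrightarrow> path_weight w (ys @ zs) = path_weight w ys + path_weight w (last ys # zs)"
  by (induction w ys rule: path_weight.induct) auto

lemma ham_weight_eq_path_weight:
  assumes "length ys = n" "n \<noteq> 0"
  shows "ham_weight n w ys = path_weight w (ys @ [hd ys])"
proof -
  have "ys \<noteq> []" using assms by auto
  then have "(ys @ [hd ys]) ! (i + 1) = ys ! ((i + 1) mod n)" if "i < n" for i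
    using assms that by (cases "i + 1 = n") (auto simp: nth_append hd_conv_nth)
  then show ?thesis
    unfolding ham_weight_def path_weight_conv_sum using assms by (auto simp: nth_append intro!: sum.cong)
qed

definition mean_completion :: "('a set \<Rightarrow> real) \<Rightarrow> 'a \<Rightarrow> 'a \<Rightarrow> 'a set \<Rightarrow> real" where
  "mean_completion w v0 a A =
     (\<Sum>zs\<in>permutations_of_set A. path_weight w (a # zs @ [v0])) / fact (card A)"

lemma mean_completion_empty [simp]: "mean_completion w v0 a {} = w {a, v0}"
  by (simp add: mean_completion_def)

lemma mean_completion_rec:
  assumes "finite A" "A \<noteq> {}"
  shows "mean_completion w v0 a A = (\<Sum>x\<in>A. w {a, x} + mean_completion w v0 x (A - {x})) / card A"
proof -
  have "(\<Sum>zs\<in>permutations_of_set (A - {x}). path_weight w (a # x # zs @ [v0])) / fact (card A - 1)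
        = w {a, x} + mean_completion w v0 x (A - {x})" if "x \<in> A" for x
    using assms that by (simp add: mean_completion_def sum.distrib add_divide_distrib)
  then show ?thesis
    unfolding mean_completion_def[of _ _ a] mean_permutations_of_set_Cons[OF assms]
    by (simp cong: sum.cong)
qed

definition star_weight :: "('a set \<Rightarrow> real) \<Rightarrow> 'a \<Rightarrow> 'a set \<Rightarrow> real" where
  "star_weight w a A = (\<Sum>u\<in>A. w {a, u})"

text \<open>Every edge inside A is counted twice.\<close>
definition inner_weight :: "('a set \<Rightarrow> real) \<Rightarrow> 'a set \<Rightarrow> real" where
  "inner_weight w A = (\<Sum>x\<in>A. star_weight w x (A - {x}))"

lemma star_weight_remove:
  "finite A \<Longrightarrow> x \<in> A \<Longrightarrow> star_weight w a (A - {x}) = star_weight w a A - w {a, x}"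
  by (simp add: star_weight_def sum_diff1)

lemma inner_weight_remove:
  assumes "finite A" "x \<in> A"
  shows "inner_weight w (A - {x}) = inner_weight w A - 2 * star_weight w x (A - {x})"
proof -
  have "star_weight w y (A - {y}) = w {x, y} + star_weight w y (A - {x} - {y})" if "y \<in> A - {x}" for y
  proof -
    have "A - {y} = insert x (A - {x} - {y})" using that assms by auto
    then show ?thesis using assms by (simp add: star_weight_def insert_commute)
  qed
  then have "(\<Sum>y\<in>A - {x}. star_weight w y (A - {y})) = star_weight w x (A - {x}) + inner_weight w (A - {x})"
    by (simp add: sum.distrib inner_weight_def star_weight_def)
  moreover have "inner_weight w A = star_weight w x (A - {x}) + (\<Sum>y\<in>A - {x}. star_weight w y (A - {y}))"
    unfolding inner_weight_def using assms by (simp add: sum.remove)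
  ultimately show ?thesis by simp
qed

lemma Diff_singleton_nonempty: "card A \<ge> 2 \<Longrightarrow> A - {x} \<noteq> {}"
  using card_mono[of "{x}" A] by auto

lemma star_inner_weight_remove:
  assumes "finite A" "x \<in> A" "card A \<ge> 2"
  shows "(star_weight w x (A - {x}) + star_weight w v0 (A - {x}) + inner_weight w (A - {x})) / card (A - {x})
       = (star_weight w v0 A + inner_weight w A - w {v0, x} - star_weight w x (A - {x})) / (real (card A) - 1)"
  using assms by (simp add: star_weight_remove inner_weight_remove of_nat_diff)

lemma mean_completion_closed_form:
  assumes "finite A" "A \<noteq> {}"
  shows "mean_completion w v0 a A = (star_weight w a A + star_weight w v0 A + inner_weight w A) / card A"
  using assms
proof (induction "card A" arbitrary: A a rule: less_induct)
  case less
  show ?case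
  proof (cases "card A = 1")
    case True
    then obtain u where "A = {u}" by (auto simp: card_Suc_eq)
    then show ?thesis by (simp add: mean_completion_rec star_weight_def inner_weight_def insert_commute)
  next
    case False
    define m where "m = real (card A)"
    have "card A \<noteq> 0" using less.prems by simp
    then have card2: "card A \<ge> 2" using False by linarith
    have "mean_completion w v0 x (A - {x}) =
          (star_weight w v0 A + inner_weight w A - w {v0, x} - star_weight w x (A - {x})) / (m - 1)"
      if "x \<in> A" for x
    proof -
      have "card (A - {x}) < card A" using that less.prems(1) card2 by simp
      then show ?thesis
        using less.hyps[of "A - {x}" x] Diff_singleton_nonempty[OF card2] less.prems(1)
          star_inner_weight_remove[OF less.prems(1) that card2]
        unfolding m_def by simp
    qed
    then have "(\<Sum>x\<in>A. w {a, x} + mean_completion w v0 x (A - {x})) = star_weight w a A +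
        (\<Sum>x\<in>A. star_weight w v0 A + inner_weight w A - w {v0, x} - star_weight w x (A - {x})) / (m - 1)"
      by (simp add: sum.distrib star_weight_def sum_divide_distrib)
    also have "(\<Sum>x\<in>A. star_weight w v0 A + inner_weight w A - w {v0, x} - star_weight w x (A - {x})) =
        (m - 1) * (star_weight w v0 A + inner_weight w A)"
      unfolding m_def by (simp add: sum_subtractf sum.distrib algebra_simps star_weight_def[of w v0] inner_weight_def)
    finally show ?thesis
      using mean_completion_rec[OF less.prems] card2 unfolding m_def by simp
  qed
qed

lemma mean_completion_remove:
  assumes "finite A" "x \<in> A" "card A \<ge> 2"
  shows "mean_completion w v0 x (A - {x}) =
         (star_weight w v0 A + inner_weight w A - w {v0, x} - star_weight w x (A - {x})) / (real (card A) - 1)"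
  using Diff_singleton_nonempty[OF assms(3)] assms(1) star_inner_weight_remove[OF assms]
  by (simp add: mean_completion_closed_form)

section \<open>Conditioning on a prefix of the cycle\<close>

lemma ham_seqs_length: "xs \<in> ham_seqs n v0 \<Longrightarrow> length xs = n"
  unfolding ham_seqs_def by (metis (mono_tags) card_lessThan distinct_card mem_Collect_eq)

lemma ham_seqs_prefix_class:
  assumes xs: "xs \<in> ham_seqs n v0" and k: "k < n"
  defines "p \<equiv> take (k + 1) xs"
  shows "{ys \<in> ham_seqs n v0. take (k + 1) ys = p} = (\<lambda>zs. p @ zs) ` permutations_of_set ({..<n} - set p)"
proof (intro equalityI subsetI)
  fix ys assume "ys \<in> {ys \<in> ham_seqs n v0. take (k + 1) ys = p}"
  then have ys: "ys = p @ drop (k + 1) ys" "distinct (p @ drop (k + 1) ys)" "set (p @ drop (k + 1) ys) = {..<n}"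
    unfolding ham_seqs_def by (metis (mono_tags, lifting) append_take_drop_id mem_Collect_eq)+
  from ys(2,3) have "set (drop (k + 1) ys) = {..<n} - set p" "distinct (drop (k + 1) ys)"
    by auto
  then show "ys \<in> (\<lambda>zs. p @ zs) ` permutations_of_set ({..<n} - set p)"
    using ys(1) by (intro image_eqI[of _ _ "drop (k + 1) ys"]) (auto simp: permutations_of_set_def)
next
  have lp: "length p = k + 1" using ham_seqs_length[OF xs] k unfolding p_def by simp
  have "distinct p" "set p \<subseteq> {..<n}" "p \<noteq> []" "hd p = v0"
    using xs lp unfolding ham_seqs_def p_def by (auto simp: hd_take dest: in_set_takeD)
  fix ys assume "ys \<in> (\<lambda>zs. p @ zs) ` permutations_of_set ({..<n} - set p)"
  then obtain zs where "ys = p @ zs" "set zs = {..<n} - set p" "distinct zs"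
    by (auto simp: permutations_of_set_def)
  with \<open>distinct p\<close> \<open>set p \<subseteq> {..<n}\<close> \<open>p \<noteq> []\<close> \<open>hd p = v0\<close> lp
  show "ys \<in> {ys \<in> ham_seqs n v0. take (k + 1) ys = p}"
    unfolding ham_seqs_def by auto
qed

lemma card_unvisited:
  assumes xs: "xs \<in> ham_seqs n v0" and k: "k < n"
  shows "card ({..<n} - set (take (k + 1) xs)) = n - (k + 1)"
proof -
  have "distinct xs" "set xs = {..<n}" using xs unfolding ham_seqs_def by auto
  then have "card (set (take (k + 1) xs)) = k + 1" "set (take (k + 1) xs) \<subseteq> {..<n}"
    using ham_seqs_length[OF xs] k by (auto simp: distinct_card dest: in_set_takeD)
  then show ?thesis by (simp add: card_Diff_subset)
qed

lemma cond_exp_prefix_eq_mean: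
  assumes xs: "xs \<in> ham_seqs n v0" and k: "k < n"
  defines "p \<equiv> take (k + 1) xs"
  defines "R \<equiv> {..<n} - set p"
  shows "cond_exp_prefix n v0 k f xs = (\<Sum>zs\<in>permutations_of_set R. f (p @ zs)) / fact (card R)"
proof -
  have inj: "inj_on (\<lambda>zs. p @ zs) (permutations_of_set R)" by (auto simp: inj_on_def)
  have "finite R" unfolding R_def by simp
  have "{ys \<in> ham_seqs n v0. take (k + 1) ys = take (k + 1) xs} = (\<lambda>zs. p @ zs) ` permutations_of_set R"
    using ham_seqs_prefix_class[OF xs k] unfolding p_def R_def .
  then show ?thesis
    unfolding cond_exp_prefix_def Let_def
    by (simp add: sum.reindex[OF inj] card_image[OF inj] R_def[symmetric] \<open>finite R\<close>)
qed

lemma ham_mart_eq: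
  assumes xs: "xs \<in> ham_seqs n v0" and k: "k < n"
  defines "p \<equiv> take (k + 1) xs"
  shows "ham_mart n w v0 k xs = path_weight w p + mean_completion w v0 (last p) ({..<n} - set p)"
proof -
  let ?R = "{..<n} - set p"
  have "p \<noteq> []" "hd p = v0" "length p = k + 1"
    using xs k ham_seqs_length[OF xs] unfolding ham_seqs_def p_def by (auto simp: hd_take)
  have "ham_weight n w (p @ zs) = path_weight w p + path_weight w (last p # zs @ [v0])"
    if "zs \<in> permutations_of_set ?R" for zs
  proof -
    have "length zs = n - (k + 1)"
      using length_finite_permutations_of_set[OF that] card_unvisited[OF xs k] unfolding p_def by simp
    then have "length (p @ zs) = n" using \<open>length p = k + 1\<close> k by simp
    with \<open>p \<noteq> []\<close> \<open>hd p = v0\<close> show ?thesis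
      using k by (simp add: ham_weight_eq_path_weight path_weight_append)
  qed
  then show ?thesis
    unfolding ham_mart_def cond_exp_prefix_eq_mean[OF xs k, folded p_def] mean_completion_def
    by (simp add: sum.distrib add_divide_distrib)
qed

lemma ham_diff_Suc_prefix:
  assumes xs: "xs \<in> ham_seqs n v0" and k: "Suc k < n"
  defines "p \<equiv> take (k + 1) xs"
  defines "R \<equiv> {..<n} - set p"
  assumes zs: "zs \<in> permutations_of_set R"
  shows "ham_diff n w v0 (Suc k) (p @ zs) =
         w {xs ! k, hd zs} + mean_completion w v0 (hd zs) (R - {hd zs}) - mean_completion w v0 (xs ! k) R"
proof -
  have "k < n" using k by simp
  have "p @ zs \<in> (\<lambda>zs. p @ zs) ` permutations_of_set R" using zs by blast
  then have ys: "p @ zs \<in> ham_seqs n v0"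
    using ham_seqs_prefix_class[OF xs \<open>k < n\<close>] unfolding p_def R_def by blast
  have lp: "length p = k + 1" "p \<noteq> []" "last p = xs ! k"
    using ham_seqs_length[OF xs] k unfolding p_def by (auto simp: take_Suc_conv_app_nth)
  have "card R = n - (k + 1)" using card_unvisited[OF xs] k unfolding R_def p_def by simp
  then have "zs \<noteq> []" using zs k by (auto simp: permutations_of_set_def)
  then have "take (Suc k + 1) (p @ zs) = p @ [hd zs]" "hd zs \<in> R"
    using lp zs by (auto simp: permutations_of_set_def neq_Nil_conv)
  moreover have "{..<n} - set (p @ [hd zs]) = R - {hd zs}" unfolding R_def by auto
  ultimately show ?thesis
    using ham_mart_eq[OF ys, of "Suc k"] ham_mart_eq[OF ys, of k] k lp
    by (simp add: ham_diff_def path_weight_append R_def)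
qed

lemma ham_diff_Suc:
  assumes xs: "xs \<in> ham_seqs n v0" and k: "Suc k < n"
  defines "R \<equiv> {..<n} - set (take (k + 1) xs)"
  shows "ham_diff n w v0 (Suc k) xs =
         w {xs ! k, xs ! Suc k} + mean_completion w v0 (xs ! Suc k) (R - {xs ! Suc k})
           - mean_completion w v0 (xs ! k) R"
proof -
  have "k < n" using k by simp
  have "xs \<in> {ys \<in> ham_seqs n v0. take (k + 1) ys = take (k + 1) xs}" using xs by simp
  then obtain zs where "xs = take (k + 1) xs @ zs" "zs \<in> permutations_of_set R"
    unfolding ham_seqs_prefix_class[OF xs \<open>k < n\<close>] R_def by blast
  then have "drop (k + 1) xs \<in> permutations_of_set R"
    by (metis append_take_drop_id same_append_eq)
  moreover have "hd (drop (k + 1) xs) = xs ! Suc k"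
    using ham_seqs_length[OF xs] k by (simp add: hd_drop_conv_nth)
  ultimately show ?thesis
    using ham_diff_Suc_prefix[OF xs k, of "drop (k + 1) xs" w] unfolding R_def by simp
qed

lemma cond_exp_sq_ham_diff:
  fixes w :: "nat set \<Rightarrow> real"
  assumes xs: "xs \<in> ham_seqs n v0" and k: "Suc k < n"
  defines "R \<equiv> {..<n} - set (take (k + 1) xs)"
  defines "g \<equiv> \<lambda>x. w {xs ! k, x} + mean_completion w v0 x (R - {x}) - mean_completion w v0 (xs ! k) R"
  shows "cond_exp_prefix n v0 k (\<lambda>ys. (ham_diff n w v0 (Suc k) ys)\<^sup>2) xs = (\<Sum>x\<in>R. (g x)\<^sup>2) / card R"
proof -
  have "card R = n - (k + 1)" using card_unvisited[OF xs] k unfolding R_def by simp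
  then have "card R \<noteq> 0" using k by simp
  then have "R \<noteq> {}" by (rule contrapos_nn) simp
  have "cond_exp_prefix n v0 k (\<lambda>ys. (ham_diff n w v0 (Suc k) ys)\<^sup>2) xs =
        (\<Sum>zs\<in>permutations_of_set R. (g (hd zs))\<^sup>2) / fact (card R)"
    using cond_exp_prefix_eq_mean[OF xs, of k] ham_diff_Suc_prefix[OF xs k] k
    unfolding g_def R_def by (simp cong: sum.cong)
  also have "\<dots> = (\<Sum>x\<in>R. (g x)\<^sup>2) / card R"
    by (rule mean_permutations_of_set_hd) (use \<open>R \<noteq> {}\<close> in \<open>simp_all add: R_def\<close>)
  finally show ?thesis .
qed

section \<open>Bounds for one step\<close>

lemma abs_sub_mean_le:
  fixes g :: "'a \<Rightarrow> real"
  assumes "finite R" "R \<noteq> {}" "\<forall>y\<in>R. \<bar>g y - c\<bar> \<le> B" "x \<in> R"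
  shows "\<bar>g x - (\<Sum>y\<in>R. g y) / card R\<bar> \<le> 2 * B"
proof -
  have "\<bar>\<Sum>y\<in>R. g y - c\<bar> \<le> card R * B"
    using assms(3) by (intro order_trans[OF sum_abs]) (simp add: sum_bounded_above)
  moreover have "(\<Sum>y\<in>R. g y) / card R - c = (\<Sum>y\<in>R. g y - c) / card R"
    using assms(1,2) by (simp add: sum_subtractf field_simps)
  ultimately have "\<bar>(\<Sum>y\<in>R. g y) / card R - c\<bar> \<le> B"
    using assms(1,2) by (simp add: abs_divide pos_divide_le_eq mult.commute card_gt_0_iff)
  then show ?thesis using assms(3,4) by (smt (verit))
qed

lemma sum_sq_sub_mean_le:
  fixes g :: "'a \<Rightarrow> real"
  assumes "finite R"
  shows "(\<Sum>x\<in>R. (g x - (\<Sum>y\<in>R. g y) / card R)\<^sup>2) \<le> (\<Sum>x\<in>R. (g x - c)\<^sup>2)"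
proof (cases "R = {}")
  case False
  define a where "a = (\<Sum>y\<in>R. g y) / card R"
  have "(\<Sum>x\<in>R. g x - a) = 0" using assms False unfolding a_def by (simp add: sum_subtractf)
  moreover have "(\<Sum>x\<in>R. (g x - c)\<^sup>2) =
      (\<Sum>x\<in>R. (g x - a)\<^sup>2 + 2 * (a - c) * (g x - a) + (a - c)\<^sup>2)"
    by (rule sum.cong) (simp_all add: power2_eq_square algebra_simps)
  ultimately have "(\<Sum>x\<in>R. (g x - c)\<^sup>2) = (\<Sum>x\<in>R. (g x - a)\<^sup>2) + card R * (a - c)\<^sup>2"
    by (simp add: sum.distrib sum_distrib_left[symmetric])
  then show ?thesis unfolding a_def[symmetric] by simp
qed simp

lemma centered_step_bounds:
  fixes a b s t m :: real
  assumes "\<bar>a\<bar> \<le> 1" "\<bar>b\<bar> \<le> 1" "\<bar>s\<bar> \<le> t" "t \<le> m - 1" "m \<ge> 2"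
  shows "\<bar>a - (b + s) / (m - 1)\<bar> \<le> 3"
    and "(a - (b + s) / (m - 1))\<^sup>2 \<le> 3 * (\<bar>a\<bar> + 1 / (m - 1)\<^sup>2 + t / (m - 1))"
proof -
  have "\<bar>(b + s) / (m - 1)\<bar> \<le> m / (m - 1)"
    using assms by (simp add: abs_divide divide_right_mono)
  also have "\<dots> \<le> 2" using assms(5) by (simp add: field_simps)
  finally show "\<bar>a - (b + s) / (m - 1)\<bar> \<le> 3" using assms(1) by linarith
  have sq3: "(x + y + z)\<^sup>2 \<le> 3 * (x\<^sup>2 + y\<^sup>2 + z\<^sup>2)" for x y z :: real
  proof -
    have "0 \<le> (x - y)\<^sup>2 + (y - z)\<^sup>2 + (x - z)\<^sup>2" by simp
    then show ?thesis by (simp add: power2_eq_square algebra_simps)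
  qed
  have ha: "a\<^sup>2 \<le> \<bar>a\<bar>"
    using assms(1) mult_right_le_one_le[of "\<bar>a\<bar>" "\<bar>a\<bar>"] by (simp add: power2_eq_square)
  have hb: "(b / (m - 1))\<^sup>2 \<le> 1 / (m - 1)\<^sup>2"
    using assms(2) abs_square_le_1[of b] by (simp add: power_divide divide_right_mono)
  have hs: "(s / (m - 1))\<^sup>2 \<le> t / (m - 1)"
  proof -
    have "s\<^sup>2 \<le> t\<^sup>2" using assms(3) abs_le_square_iff[of s t] by simp
    also have "\<dots> \<le> t * (m - 1)"
      using assms(3,4) by (simp add: power2_eq_square mult_left_mono)
    finally have "s\<^sup>2 / (m - 1)\<^sup>2 \<le> t * (m - 1) / (m - 1)\<^sup>2"
      by (rule divide_right_mono) simp
    then show ?thesis using assms(5) by (simp add: power_divide power2_eq_square)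
  qed
  have "3 * (a\<^sup>2 + (b / (m - 1))\<^sup>2 + (s / (m - 1))\<^sup>2) \<le>
      3 * (\<bar>a\<bar> + 1 / (m - 1)\<^sup>2 + t / (m - 1))"
    by (intro mult_left_mono add_mono ha hb hs) simp
  moreover have "(a - (b + s) / (m - 1))\<^sup>2 \<le> 3 * (a\<^sup>2 + (b / (m - 1))\<^sup>2 + (s / (m - 1))\<^sup>2)"
    using sq3[of a "- (b / (m - 1))" "- (s / (m - 1))"] by (simp add: add_divide_distrib diff_diff_eq)
  ultimately show "(a - (b + s) / (m - 1))\<^sup>2 \<le> 3 * (\<bar>a\<bar> + 1 / (m - 1)\<^sup>2 + t / (m - 1))"
    by (rule order_trans[rotated])
qed

definition abs_degree :: "nat \<Rightarrow> (nat set \<Rightarrow> real) \<Rightarrow> nat \<Rightarrow> real" where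
  "abs_degree n w v = (\<Sum>u\<in>{..<n} - {v}. \<bar>w {v, u}\<bar>)"

definition total_degree :: "nat \<Rightarrow> (nat set \<Rightarrow> real) \<Rightarrow> real" where
  "total_degree n w = (\<Sum>v<n. abs_degree n w v)"

lemma abs_degree_nonneg: "0 \<le> abs_degree n w v"
  by (simp add: abs_degree_def sum_nonneg)

lemma total_degree_nonneg: "0 \<le> total_degree n w"
  by (simp add: total_degree_def abs_degree_nonneg sum_nonneg)

lemma abs_weight_le_1:
  fixes w :: "nat set \<Rightarrow> real"
  shows "\<forall>e\<in>Kn_edges n. \<bar>w e\<bar> \<le> 1 \<Longrightarrow> a < n \<Longrightarrow> b < n \<Longrightarrow> a \<noteq> b \<Longrightarrow>
    \<bar>w {a, b}\<bar> \<le> 1"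
  by (simp add: Kn_edges_def)

lemma sum_abs_weight_le_card:
  fixes w :: "nat set \<Rightarrow> real"
  assumes "\<forall>e\<in>Kn_edges n. \<bar>w e\<bar> \<le> 1" "B \<subseteq> {..<n}" "a < n" "a \<notin> B"
  shows "(\<Sum>u\<in>B. \<bar>w {a, u}\<bar>) \<le> real (card B)"
proof -
  have "(\<Sum>u\<in>B. \<bar>w {a, u}\<bar>) \<le> (\<Sum>u\<in>B. 1)"
    using assms by (intro sum_mono abs_weight_le_1[OF assms(1)]) auto
  then show ?thesis by simp
qed

lemma completion_step_centered_bounds:
  fixes w :: "nat set \<Rightarrow> real"
  assumes wb: "\<forall>e\<in>Kn_edges n. \<bar>w e\<bar> \<le> 1" and R: "R \<subseteq> {..<n}" "card R \<ge> 2"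
    and vk: "vk < n" "vk \<notin> R" and v0: "v0 < n" "v0 \<notin> R"
  defines "c \<equiv> (star_weight w v0 R + inner_weight w R) / (real (card R) - 1)"
  defines "t \<equiv> \<lambda>x. \<Sum>u\<in>R - {x}. \<bar>w {x, u}\<bar>"
  assumes x: "x \<in> R"
  shows "\<bar>w {vk, x} + mean_completion w v0 x (R - {x}) - c\<bar> \<le> 3"
    and "(w {vk, x} + mean_completion w v0 x (R - {x}) - c)\<^sup>2 \<le>
           3 * (\<bar>w {vk, x}\<bar> + 1 / (real (card R) - 1)\<^sup>2 + t x / (real (card R) - 1))"
proof -
  have fin: "finite R" using R(2) by (metis card.infinite not_numeral_le_zero)
  have eq: "w {vk, x} + mean_completion w v0 x (R - {x}) - c =
        w {vk, x} - (w {v0, x} + star_weight w x (R - {x})) / (real (card R) - 1)"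
    using mean_completion_remove[OF fin x R(2)] R(2) unfolding c_def by (simp add: field_simps)
  have "\<bar>w {vk, x}\<bar> \<le> 1" "\<bar>w {v0, x}\<bar> \<le> 1"
    using abs_weight_le_1[OF wb] x R vk v0 by auto
  moreover have "\<bar>star_weight w x (R - {x})\<bar> \<le> t x"
    unfolding star_weight_def t_def by (rule sum_abs)
  moreover have "t x \<le> real (card R) - 1"
    using sum_abs_weight_le_card[OF wb, of "R - {x}" x] fin x R unfolding t_def by (auto simp: of_nat_diff)
  moreover have "real (card R) \<ge> 2" using R(2) by simp
  ultimately show "\<bar>w {vk, x} + mean_completion w v0 x (R - {x}) - c\<bar> \<le> 3"
    and "(w {vk, x} + mean_completion w v0 x (R - {x}) - c)\<^sup>2 \<le>
           3 * (\<bar>w {vk, x}\<bar> + 1 / (real (card R) - 1)\<^sup>2 + t x / (real (card R) - 1))"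
    unfolding eq by (fact centered_step_bounds)+
qed

lemma sum_abs_weight_le_abs_degree:
  "R \<subseteq> {..<n} \<Longrightarrow> a \<notin> R \<Longrightarrow> (\<Sum>x\<in>R. \<bar>w {a, x}\<bar>) \<le> abs_degree n w a"
  unfolding abs_degree_def by (intro sum_mono2) auto

lemma sum_inner_abs_weight_le_total_degree:
  assumes "R \<subseteq> {..<n}"
  shows "(\<Sum>x\<in>R. \<Sum>u\<in>R - {x}. \<bar>w {x, u}\<bar>) \<le> total_degree n w"
proof -
  have "(\<Sum>x\<in>R. \<Sum>u\<in>R - {x}. \<bar>w {x, u}\<bar>) \<le> (\<Sum>x\<in>R. abs_degree n w x)"
    using assms by (intro sum_mono sum_abs_weight_le_abs_degree) auto
  also have "\<dots> \<le> total_degree n w"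
    unfolding total_degree_def using assms by (intro sum_mono2) (auto simp: abs_degree_nonneg)
  finally show ?thesis .
qed

lemma completion_dev_bounds:
  fixes w :: "nat set \<Rightarrow> real"
  assumes wb: "\<forall>e\<in>Kn_edges n. \<bar>w e\<bar> \<le> 1" and R: "R \<subseteq> {..<n}" "card R \<ge> 2"
    and vk: "vk < n" "vk \<notin> R" and v0: "v0 < n" "v0 \<notin> R"
  defines "g \<equiv> \<lambda>x. w {vk, x} + mean_completion w v0 x (R - {x}) - mean_completion w v0 vk R"
    and "m \<equiv> real (card R)"
  shows "\<forall>x\<in>R. \<bar>g x\<bar> \<le> 6"
    and "(\<Sum>x\<in>R. (g x)\<^sup>2) \<le> 3 * (\<Sum>x\<in>R. \<bar>w {vk, x}\<bar>) + 3 * m / (m - 1)\<^sup>2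
           + 3 * (\<Sum>x\<in>R. \<Sum>u\<in>R - {x}. \<bar>w {x, u}\<bar>) / (m - 1)"
proof -
  define c where "c = (star_weight w v0 R + inner_weight w R) / (m - 1)"
  define t where "t x = (\<Sum>u\<in>R - {x}. \<bar>w {x, u}\<bar>)" for x
  define g0 where "g0 x = w {vk, x} + mean_completion w v0 x (R - {x})" for x
  have fin: "finite R" and ne: "R \<noteq> {}"
    using R(2) by (auto intro: card_ge_0_finite)
  have g: "g x = g0 x - (\<Sum>y\<in>R. g0 y) / card R" for x
    unfolding g_def g0_def using mean_completion_rec[OF fin ne] by simp
  note step = completion_step_centered_bounds[OF wb R vk v0, folded m_def, folded c_def t_def g0_def]
  show "\<forall>x\<in>R. \<bar>g x\<bar> \<le> 6"
    using abs_sub_mean_le[OF fin ne, of g0 c 3] step(1) unfolding g by simp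
  have "(\<Sum>x\<in>R. (g x)\<^sup>2) \<le> (\<Sum>x\<in>R. (g0 x - c)\<^sup>2)"
    unfolding g by (rule sum_sq_sub_mean_le[OF fin])
  also have "\<dots> \<le> (\<Sum>x\<in>R. 3 * (\<bar>w {vk, x}\<bar> + 1 / (m - 1)\<^sup>2 + t x / (m - 1)))"
    by (rule sum_mono) (rule step(2))
  also have "\<dots> = 3 * (\<Sum>x\<in>R. \<bar>w {vk, x}\<bar>) + 3 * m / (m - 1)\<^sup>2 + 3 * (\<Sum>x\<in>R. t x) / (m - 1)"
    unfolding m_def by (simp add: sum.distrib sum_distrib_left sum_divide_distrib)
  finally show "(\<Sum>x\<in>R. (g x)\<^sup>2) \<le> 3 * (\<Sum>x\<in>R. \<bar>w {vk, x}\<bar>) + 3 * m / (m - 1)\<^sup>2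
           + 3 * (\<Sum>x\<in>R. \<Sum>u\<in>R - {x}. \<bar>w {x, u}\<bar>) / (m - 1)"
    unfolding t_def .
qed

lemma inverse_sq_pred_le: "(m :: real) \<ge> 2 \<Longrightarrow> 1 / (m - 1)\<^sup>2 \<le> 2 / (m * (m - 1))"
proof -
  assume m: "m \<ge> 2"
  then have "1 / (m - 1) \<le> 2 / m" by (simp add: field_simps)
  then have "1 / (m - 1) * (1 / (m - 1)) \<le> 2 / m * (1 / (m - 1))"
    by (rule mult_right_mono) (use m in simp)
  then show ?thesis by (simp add: power2_eq_square)
qed

lemma completion_dev_mean_sq_le:
  fixes w :: "nat set \<Rightarrow> real"
  assumes wb: "\<forall>e\<in>Kn_edges n. \<bar>w e\<bar> \<le> 1" and R: "R \<subseteq> {..<n}" "card R \<ge> 2"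
    and vk: "vk < n" "vk \<notin> R" and v0: "v0 < n" "v0 \<notin> R"
  defines "g \<equiv> \<lambda>x. w {vk, x} + mean_completion w v0 x (R - {x}) - mean_completion w v0 vk R"
    and "m \<equiv> real (card R)"
  shows "(\<Sum>x\<in>R. (g x)\<^sup>2) / m \<le> 3 * min 1 (abs_degree n w vk / m) + 6 / (m * (m - 1))
           + 3 * min 1 (total_degree n w / (m * (m - 1)))"
proof -
  define A where "A = (\<Sum>x\<in>R. \<bar>w {vk, x}\<bar>)"
  define T where "T = (\<Sum>x\<in>R. \<Sum>u\<in>R - {x}. \<bar>w {x, u}\<bar>)"
  have fin: "finite R" and m: "m \<ge> 2" using R(2) unfolding m_def by (auto intro: card_ge_0_finite)
  have "(\<Sum>x\<in>R. (g x)\<^sup>2) / m \<le> (3 * A + 3 * m / (m - 1)\<^sup>2 + 3 * T / (m - 1)) / m"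
    using completion_dev_bounds(2)[OF wb R vk v0] m unfolding g_def m_def A_def T_def
    by (simp add: divide_right_mono)
  also have "\<dots> = 3 * (A / m) + 3 * (1 / (m - 1)\<^sup>2) + 3 * (T / (m * (m - 1)))"
    using m by (simp add: field_simps)
  also have "A / m \<le> min 1 (abs_degree n w vk / m)"
    using sum_abs_weight_le_abs_degree[OF R(1) vk(2)] sum_abs_weight_le_card[OF wb R(1) vk] m
    unfolding A_def m_def by (simp add: divide_right_mono)
  also have "1 / (m - 1)\<^sup>2 \<le> 2 / (m * (m - 1))"
    using m by (rule inverse_sq_pred_le)
  also have "T / (m * (m - 1)) \<le> min 1 (total_degree n w / (m * (m - 1)))"
  proof -
    have "T \<le> (\<Sum>x\<in>R. m - 1)"
      using fin R unfolding T_def m_def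
      by (intro sum_mono order_trans[OF sum_abs_weight_le_card[OF wb]]) (auto simp: of_nat_diff)
    then show ?thesis
      using sum_inner_abs_weight_le_total_degree[OF R(1)] m unfolding T_def m_def
      by (simp add: divide_right_mono)
  qed
  finally show ?thesis by simp
qed

lemma unvisited_step_vertices:
  assumes xs: "xs \<in> ham_seqs n v0" and k: "Suc k < n"
  defines "R \<equiv> {..<n} - set (take (k + 1) xs)"
  shows "xs ! k < n" "xs ! k \<notin> R" "v0 < n" "v0 \<notin> R" "xs ! Suc k \<in> R"
proof -
  have lx: "length xs = n" and dx: "distinct xs" "hd xs = v0" "set xs = {..<n}"
    using xs ham_seqs_length[OF xs] unfolding ham_seqs_def by auto
  have "take (k + 1) xs \<noteq> []" using lx k by (cases xs) auto
  then have "v0 \<in> set (take (k + 1) xs)" using dx(2) by (metis hd_in_set hd_take zero_less_Suc Suc_eq_plus1)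
  moreover have "xs ! k \<in> set (take (k + 1) xs)" using lx k by (simp add: take_Suc_conv_app_nth)
  moreover have "xs ! Suc k \<in> set (drop (k + 1) xs)"
    using lx k by (metis Suc_eq_plus1 hd_drop_conv_nth hd_in_set drop_eq_Nil2 not_le)
  ultimately show "xs ! k < n" "xs ! k \<notin> R" "v0 < n" "v0 \<notin> R" "xs ! Suc k \<in> R"
    using set_take_disj_set_drop_if_distinct[OF dx(1) order_refl, of "k + 1"] dx(3)
    unfolding R_def by (auto dest: in_set_takeD in_set_dropD)
qed

lemma ham_diff_bounds:
  fixes w :: "nat set \<Rightarrow> real"
  assumes xs: "xs \<in> ham_seqs n v0" and wb: "\<forall>e\<in>Kn_edges n. \<bar>w e\<bar> \<le> 1" and i: "i \<in> {1..n-1}"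
  defines "m \<equiv> real (n - i)"
  shows "\<bar>ham_diff n w v0 i xs\<bar> \<le> 6"
    and "cond_exp_prefix n v0 (i - 1) (\<lambda>ys. (ham_diff n w v0 i ys)\<^sup>2) xs \<le>
           3 * min 1 (abs_degree n w (xs ! (i - 1)) / m) + 6 / (m * (m - 1))
             + 3 * min 1 (total_degree n w / (m * (m - 1)))"
proof -
  obtain k where ik: "i = Suc k" and k: "Suc k < n" using i by (cases i) auto
  define R where "R = {..<n} - set (take (k + 1) xs)"
  define g where "g x = w {xs ! k, x} + mean_completion w v0 x (R - {x}) - mean_completion w v0 (xs ! k) R" for x
  note vs = unvisited_step_vertices[OF xs k, folded R_def]
  have R: "R \<subseteq> {..<n}" and cR: "card R = n - i"
    using card_unvisited[OF xs] k ik unfolding R_def by auto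
  have diff: "ham_diff n w v0 i xs = g (xs ! Suc k)"
    using ham_diff_Suc[OF xs k] unfolding ik g_def R_def by simp
  have var: "cond_exp_prefix n v0 (i - 1) (\<lambda>ys. (ham_diff n w v0 i ys)\<^sup>2) xs = (\<Sum>x\<in>R. (g x)\<^sup>2) / m"
    using cond_exp_sq_ham_diff[OF xs k] cR unfolding ik g_def R_def m_def by simp
  have "\<bar>g (xs ! Suc k)\<bar> \<le> 6 \<and> (\<Sum>x\<in>R. (g x)\<^sup>2) / m \<le>
    3 * min 1 (abs_degree n w (xs ! k) / m) + 6 / (m * (m - 1)) + 3 * min 1 (total_degree n w / (m * (m - 1)))"
  proof (cases "card R = 1")
    case True
    then obtain x where "R = {x}" by (auto simp: card_Suc_eq)
    moreover from this have "g x = 0" unfolding g_def by (simp add: mean_completion_rec)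
    ultimately show ?thesis
      using vs(5) cR True unfolding m_def by (simp add: abs_degree_nonneg total_degree_nonneg)
  next
    case False
    then have "card R \<ge> 2" using cR k ik by simp
    then show ?thesis
      using completion_dev_bounds(1)[OF wb R _ vs(1-4)] completion_dev_mean_sq_le[OF wb R _ vs(1-4)]
        vs(5) cR unfolding g_def m_def by simp
  qed
  then show "\<bar>ham_diff n w v0 i xs\<bar> \<le> 6"
    and "cond_exp_prefix n v0 (i - 1) (\<lambda>ys. (ham_diff n w v0 i ys)\<^sup>2) xs \<le>
           3 * min 1 (abs_degree n w (xs ! (i - 1)) / m) + 6 / (m * (m - 1))
             + 3 * min 1 (total_degree n w / (m * (m - 1)))"
    using diff var ik by simp_all
qed

section \<open>Summation over the steps\<close>

lemma sum_recip_pronic_eq: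
  assumes "1 \<le> K" "K \<le> N"
  shows "(\<Sum>m\<in>{K<..N}. 1 / (real m * (real m - 1))) = 1 / K - 1 / N"
  using assms(2)
proof (induction N rule: dec_induct)
  case (step N)
  have "{K<..Suc N} = insert (Suc N) {K<..N}" using step.hyps by auto
  moreover have "1 / (real (Suc N) * real N) = 1 / N - 1 / Suc N"
    using step.hyps assms(1) by (simp add: field_simps)
  ultimately show ?case using step.IH by simp
qed simp

lemma sum_recip_pronic_le: "(\<Sum>m\<in>{K<..N}. 1 / (real m * (real m - 1))) \<le> 2 / (real K + 1)"
proof -
  have le: "(\<Sum>m\<in>{K<..N}. 1 / (real m * (real m - 1))) \<le> 1 / K" if "1 \<le> K" for K
  proof (cases "K \<le> N")
    case True
    then show ?thesis using sum_recip_pronic_eq[OF that True] by simp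
  qed simp
  show ?thesis
  proof (cases "K = 0")
    case True
    \<comment> \<open>the term for m = 1 is 1 / (1 * 0) = 0\<close>
    have "(\<Sum>m\<in>{0<..N}. 1 / (real m * (real m - 1))) = (\<Sum>m\<in>{1<..N}. 1 / (real m * (real m - 1)))"
      by (rule sum.mono_neutral_right) auto
    with le[of 1] True show ?thesis by simp
  next
    case False
    then have "1 / real K \<le> 2 / (real K + 1)" by (simp add: field_simps)
    with le[of K] False show ?thesis by simp
  qed
qed

lemma sum_le_of_tail_bounds:
  fixes f :: "'i \<Rightarrow> real" and mm :: "'i \<Rightarrow> nat"
  assumes fin: "finite I" and inj: "inj_on mm I" and pos: "\<forall>i\<in>I. mm i \<ge> 1"
    and f01: "\<forall>i\<in>I. 0 \<le> f i \<and> f i \<le> 1" and s: "s \<ge> 0"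
    and tail: "\<And>K. (\<Sum>i\<in>{i\<in>I. mm i > K}. f i) \<le> 2 * s\<^sup>2 / (real K + 1)"
  shows "(\<Sum>i\<in>I. f i) \<le> 3 * s"
proof -
  define K where "K = nat \<lfloor>s\<rfloor>"
  have K: "real K \<le> s" "s < real K + 1" unfolding K_def using s by linarith+
  have "(\<Sum>i\<in>{i\<in>I. mm i \<le> K}. f i) \<le> card {i\<in>I. mm i \<le> K}"
    using f01 sum_bounded_above[of "{i\<in>I. mm i \<le> K}" f 1] by simp
  also have "card {i\<in>I. mm i \<le> K} \<le> card {1..K}"
    by (rule card_inj_on_le[where f = mm]) (use inj pos in \<open>auto simp: inj_on_def\<close>)
  finally have head: "(\<Sum>i\<in>{i\<in>I. mm i \<le> K}. f i) \<le> s" using K by simp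
  have "2 * s\<^sup>2 \<le> 2 * s * (real K + 1)" using K s by (simp add: power2_eq_square mult_left_mono)
  then have "2 * s\<^sup>2 / (real K + 1) \<le> 2 * s" by (simp add: divide_le_eq add_pos_nonneg)
  moreover have "(\<Sum>i\<in>I. f i) = (\<Sum>i\<in>{i\<in>I. mm i \<le> K}. f i) + (\<Sum>i\<in>{i\<in>I. mm i > K}. f i)"
    using fin by (subst sum.union_disjoint[symmetric]) (auto intro: sum.cong)
  ultimately show ?thesis using head tail[of K] by linarith
qed

lemma sum_min_one_div_le:
  fixes c :: "'i \<Rightarrow> real" and mm :: "'i \<Rightarrow> nat"
  assumes fin: "finite I" and inj: "inj_on mm I" and pos: "\<forall>i\<in>I. mm i \<ge> 1"
    and c: "\<forall>i\<in>I. 0 \<le> c i" "(\<Sum>i\<in>I. c i) \<le> D"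
  shows "(\<Sum>i\<in>I. min 1 (c i / mm i)) \<le> 3 * sqrt D"
proof (rule sum_le_of_tail_bounds[OF fin inj pos])
  have "0 \<le> sum c I" using c(1) by (simp add: sum_nonneg)
  then have D: "0 \<le> D" using c(2) by linarith
  then show "0 \<le> sqrt D" by simp
  show "\<forall>i\<in>I. 0 \<le> min 1 (c i / mm i) \<and> min 1 (c i / mm i) \<le> 1" using c by simp
  fix K
  have "(\<Sum>i\<in>{i\<in>I. mm i > K}. min 1 (c i / mm i)) \<le> (\<Sum>i\<in>{i\<in>I. mm i > K}. c i / (real K + 1))"
    using c by (intro sum_mono min.coboundedI2 divide_left_mono) auto
  also have "\<dots> \<le> (\<Sum>i\<in>I. c i) / (real K + 1)"
    unfolding sum_divide_distrib[symmetric] using fin c by (intro divide_right_mono sum_mono2) auto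
  also have "\<dots> \<le> 2 * (sqrt D)\<^sup>2 / (real K + 1)"
    using c D by (intro divide_right_mono) auto
  finally show "(\<Sum>i\<in>{i\<in>I. mm i > K}. min 1 (c i / mm i)) \<le> 2 * (sqrt D)\<^sup>2 / (real K + 1)" .
qed

lemma sum_min_one_pronic_le:
  assumes D: "0 \<le> D"
  shows "(\<Sum>m\<in>{1..N}. min 1 (D / (real m * (real m - 1)))) \<le> 3 * sqrt D"
proof (rule sum_le_of_tail_bounds[where mm = id])
  show "\<forall>m\<in>{1..N}. 0 \<le> min 1 (D / (real m * (real m - 1))) \<and> min 1 (D / (real m * (real m - 1))) \<le> 1"
    using D by (auto intro!: divide_nonneg_nonneg)
  fix K
  have "(\<Sum>m\<in>{m\<in>{1..N}. id m > K}. min 1 (D / (real m * (real m - 1))))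
      \<le> D * (\<Sum>m\<in>{K<..N}. 1 / (real m * (real m - 1)))"
    unfolding sum_distrib_left by (rule sum_mono2[THEN order_trans[rotated], OF _ _ _ sum_mono]) auto
  also have "\<dots> \<le> D * (2 / (real K + 1))"
    using D by (intro mult_left_mono sum_recip_pronic_le)
  finally show "(\<Sum>m\<in>{m\<in>{1..N}. id m > K}. min 1 (D / (real m * (real m - 1))))
      \<le> 2 * (sqrt D)\<^sup>2 / (real K + 1)"
    using D by (simp add: mult.commute)
qed (use D in auto)

lemma total_degree_eq: "total_degree n w = 2 * total_weight n w"
proof -
  define P where "P = Sigma {..<n} (\<lambda>v. {..<n} - {v})"
  have "total_degree n w = (\<Sum>(v, u)\<in>P. \<bar>w {v, u}\<bar>)"
    unfolding total_degree_def abs_degree_def P_def by (simp add: sum.Sigma)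
  also have "\<dots> = (\<Sum>e\<in>Kn_edges n. \<Sum>(v, u)\<in>{q \<in> P. (\<lambda>(v, u). {v, u}) q = e}. \<bar>w {v, u}\<bar>)"
    by (rule sum.group[symmetric])
      (auto simp: P_def Kn_edges_def intro: finite_subset[of _ "Pow {..<n}"])
  also have "\<dots> = (\<Sum>e\<in>Kn_edges n. 2 * \<bar>w e\<bar>)"
  proof (rule sum.cong[OF refl])
    fix e assume "e \<in> Kn_edges n"
    then obtain a b where ab: "e = {a, b}" "a \<noteq> b" "a < n" "b < n"
      unfolding Kn_edges_def by (auto simp: card_2_iff)
    then have "{q \<in> P. (\<lambda>(v, u). {v, u}) q = e} = {(a, b), (b, a)}"
      unfolding P_def by (auto simp: doubleton_eq_iff)
    then show "(\<Sum>(v, u)\<in>{q \<in> P. (\<lambda>(v, u). {v, u}) q = e}. \<bar>w {v, u}\<bar>) = 2 * \<bar>w e\<bar>"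
      using ab by (simp add: insert_commute)
  qed
  finally show ?thesis unfolding total_weight_def by (simp add: sum_distrib_left)
qed

lemma sum_abs_degree_nth_le:
  assumes xs: "xs \<in> ham_seqs n v0"
  shows "(\<Sum>i\<in>{1..n-1}. abs_degree n w (xs ! (i - 1))) \<le> total_degree n w"
proof -
  have lx: "length xs = n" and dx: "distinct xs" "set xs = {..<n}"
    using xs ham_seqs_length[OF xs] unfolding ham_seqs_def by auto
  have inj: "inj_on (\<lambda>i. xs ! (i - 1)) {1..n-1}"
  proof (rule inj_onI)
    fix i j assume "i \<in> {1..n-1}" "j \<in> {1..n-1}" "xs ! (i - 1) = xs ! (j - 1)"
    moreover have "i - 1 < length xs" "j - 1 < length xs"
      using lx \<open>i \<in> {1..n-1}\<close> \<open>j \<in> {1..n-1}\<close> by auto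
    ultimately show "i = j" using nth_eq_iff_index_eq[OF dx(1)] by fastforce
  qed
  have "(\<lambda>i. xs ! (i - 1)) ` {1..n-1} \<subseteq> {..<n}"
    using dx(2) lx by (auto simp flip: dx(2))
  then have "(\<Sum>v\<in>(\<lambda>i. xs ! (i - 1)) ` {1..n-1}. abs_degree n w v) \<le> total_degree n w"
    unfolding total_degree_def by (intro sum_mono2) (auto simp: abs_degree_nonneg)
  then show ?thesis unfolding sum.reindex[OF inj] o_def .
qed

lemma ham_pqv_le:
  fixes w :: "nat set \<Rightarrow> real"
  assumes xs: "xs \<in> ham_seqs n v0" and wb: "\<forall>e\<in>Kn_edges n. \<bar>w e\<bar> \<le> 1"
  shows "ham_pqv n w v0 xs \<le> 18 * sqrt (total_degree n w) + 12"
proof -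
  define D where "D = total_degree n w"
  define p where "p m = 1 / (real m * (real m - 1))" for m :: nat
  define a where "a i = min 1 (abs_degree n w (xs ! (i - 1)) / real (n - i))" for i
  have "xs \<noteq> []" using xs by (simp add: ham_seqs_def)
  then have "n \<noteq> 0" using ham_seqs_length[OF xs] by auto
  have reflect: "(\<Sum>i=1..n-1. f (n - i)) = (\<Sum>m=1..n-1. f m)" for f :: "nat \<Rightarrow> real"
    unfolding sum.atLeastAtMost_rev[of "\<lambda>i. f (n - i)" 1 "n - 1"]
    using \<open>n \<noteq> 0\<close> by (intro sum.cong) auto
  have "ham_pqv n w v0 xs \<le> (\<Sum>i=1..n-1. 3 * a i + 6 * p (n - i) + 3 * min 1 (D * p (n - i)))"
    unfolding ham_pqv_def
    by (rule sum_mono) (use ham_diff_bounds(2)[OF xs wb] in \<open>simp add: a_def p_def D_def\<close>)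
  also have "\<dots> = 3 * (\<Sum>i=1..n-1. a i) + 6 * (\<Sum>i=1..n-1. p (n - i)) + 3 * (\<Sum>i=1..n-1. min 1 (D * p (n - i)))"
    by (simp add: sum.distrib sum_distrib_left)
  also have "\<dots> = 3 * (\<Sum>i=1..n-1. a i) + 6 * (\<Sum>m=1..n-1. p m) + 3 * (\<Sum>m=1..n-1. min 1 (D * p m))"
    by (simp only: reflect reflect[of "\<lambda>m. min 1 (D * p m)"])
  also have "(\<Sum>i=1..n-1. a i) \<le> 3 * sqrt D"
    unfolding a_def D_def
    by (rule sum_min_one_div_le) (use sum_abs_degree_nth_le[OF xs] in \<open>auto simp: inj_on_def abs_degree_nonneg\<close>)
  also have "(\<Sum>m=1..n-1. p m) \<le> 2"
    using sum_recip_pronic_le[of 0 "n - 1"] unfolding p_def by (simp add: atLeastSucAtMost_greaterThanAtMost)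
  also have "(\<Sum>m=1..n-1. min 1 (D * p m)) \<le> 3 * sqrt D"
    using sum_min_one_pronic_le[of D "n - 1"] total_degree_nonneg unfolding p_def D_def by simp
  finally show ?thesis unfolding D_def by linarith
qed

theorem lemma4p2:
  fixes n v0 :: nat and w :: "nat set \<Rightarrow> real" and d :: real
  assumes n3: "n \<ge> 3"
    and wbound: "\<forall>e\<in>Kn_edges n. \<bar>w e\<bar> \<le> 1"
    and d01: "0 \<le> d" "d \<le> 1"
    and wtot: "total_weight n w = d * real (n choose 2)"
    and v0: "v0 < n"
    and v0light: "(\<Sum>v\<in>{..<n} - {v0}. \<bar>w {v0, v}\<bar>) \<le> 2 * total_weight n w / real n"
  shows "\<forall>xs\<in>ham_seqs n v0.
           (\<forall>i\<in>{1..n-1}. \<bar>ham_diff n w v0 i xs\<bar> \<le> 6) \<and>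
           ham_pqv n w v0 xs \<le> 60 * (sqrt d * real n + 1)"
proof
  fix xs assume xs: "xs \<in> ham_seqs n v0"
  have "even (n * (n - 1))" by (cases "even n") auto
  then have "2 * (n choose 2) = n * (n - 1)" by (simp add: choose_two)
  then have "2 * real (n choose 2) = real n * (real n - 1)"
    using n3 by (metis of_nat_1 of_nat_diff of_nat_mult of_nat_numeral le_trans one_le_numeral)
  then have "total_degree n w = d * (real n * (real n - 1))"
    unfolding total_degree_eq wtot by simp
  also have "\<dots> \<le> d * (real n)\<^sup>2"
    using d01(1) by (intro mult_left_mono) (simp_all add: power2_eq_square mult_left_mono)
  finally have "sqrt (total_degree n w) \<le> sqrt (d * (real n)\<^sup>2)"
    by (rule real_sqrt_le_mono)
  also have "\<dots> = sqrt d * real n" by (simp add: real_sqrt_mult)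
  finally have "sqrt (total_degree n w) \<le> sqrt d * real n" .
  moreover have "0 \<le> sqrt d * real n" using d01(1) by simp
  moreover have "18 * x + 12 \<le> 60 * (y + 1)" if "x \<le> y" "0 \<le> y" for x y :: real
    using that by (simp add: algebra_simps)
  ultimately have "18 * sqrt (total_degree n w) + 12 \<le> 60 * (sqrt d * real n + 1)" by blast
  then show "(\<forall>i\<in>{1..n-1}. \<bar>ham_diff n w v0 i xs\<bar> \<le> 6) \<and>
      ham_pqv n w v0 xs \<le> 60 * (sqrt d * real n + 1)"
    using ham_diff_bounds(1)[OF xs wbound] ham_pqv_le[OF xs wbound] by auto
qed

end
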